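(* Let $b\ge2$, $k\in\mathbb{N}$, let $A$ be a nonempty subset of $\{0,1,\ldots,k\}$, and let $f\in\mathcal{M}^b$ have set-array representation $(A,\emptyset,\ldots,\emptyset)$. Then $d(f)\le d([k]_b)$, and the inequality is strict for $f\neq[k]_b$.
   Context: $\mathbb{N}=\{0,1,\ldots\}$, $[k]=\{0,\ldots,k\}$. $\mathcal{M}^b$ is the set of finitely supported functions $f:\mathbb{N}\to\{0,\ldots,b\}$ (finite multisets with multiplicities at most $b$); its set-array representation is $(A_1,\ldots,A_b)$ with $A_i=\{a:f(a)\ge i\}$. Multiset addition is coordinatewise on set arrays: $(A_i)_i+(B_i)_i=(A_i+B_i)_i$ with $S+T=\{s+t:s\in S,t\in T\}$ and $S+\emptyset=\emptyset$. $g$ is a divisor of $f$ if $f=g+h$ for some $h\in\mathcal{M}^b$; $d(f)$ is the number of divisors of $f$. $[k]_b$ is the multiset with set-array representation $([k],\emptyset,\ldots,\emptyset)$. *)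

theory Defs
  imports Main
begin

definition Mb :: "nat \<Rightarrow> (nat \<Rightarrow> nat) set" where
  "Mb b = {f. finite {a. f a \<noteq> 0} \<and> (\<forall>a. f a \<le> b)}"

text \<open>i-th component of the set-array representation (meaningful for 1 <= i <= b).\<close>
definition setarr :: "(nat \<Rightarrow> nat) \<Rightarrow> nat \<Rightarrow> nat set" where
  "setarr f i = {a. f a \<ge> i}"

definition sumset :: "nat set \<Rightarrow> nat set \<Rightarrow> nat set" where
  "sumset S T = {s + t | s t. s \<in> S \<and> t \<in> T}"

text \<open>f = g + h in M^b, addition coordinatewise on set arrays.\<close>
definition is_msum :: "nat \<Rightarrow> (nat \<Rightarrow> nat) \<Rightarrow> (nat \<Rightarrow> nat) \<Rightarrow> (nat \<Rightarrow> nat) \<Rightarrow> bool" where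
  "is_msum b f g h \<longleftrightarrow> (\<forall>i\<in>{1..b}. setarr f i = sumset (setarr g i) (setarr h i))"

definition divisor :: "nat \<Rightarrow> (nat \<Rightarrow> nat) \<Rightarrow> (nat \<Rightarrow> nat) \<Rightarrow> bool" where
  "divisor b g f \<longleftrightarrow> g \<in> Mb b \<and> (\<exists>h\<in>Mb b. is_msum b f g h)"

definition num_div :: "nat \<Rightarrow> (nat \<Rightarrow> nat) \<Rightarrow> nat" where
  "num_div b f = card {g. divisor b g f}"

definition intv_b :: "nat \<Rightarrow> nat \<Rightarrow> nat \<Rightarrow> nat" where
  "intv_b b k = (\<lambda>a. if a \<le> k then 1 else 0)"

end

theory Submission
  imports Defs "HOL-Library.FuncSet"
begin

(* A divisor g of f = (A, {}, ..., {}) is the same as a summand S of A (a set with S + H = A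
   for some H), the first layer of g, together with arbitrary multiplicities in {1..b} on S.
   Hence d(f) is the weight of A, the sum of b^|S| over the summands S of A, and the claim is
   that [k] has strictly the largest weight among the nonempty A \<subseteq> [k]. Induct on k.
   If 0 \<in> A, every summand S of A lies inside A, and adding to S the points of [0, max S]
   missing from A gives a summand of [k] from which S is recovered; this injection does not
   decrease |S|; it increases |A| if max A = k, and misses [k] otherwise. If 0 \<notin> A, then A = A' + 1 and
   every summand of A is a summand of A' or a translate of one, so the weight of A is at most
   twice that of A' \<subseteq> [k - 1]; but appending max T + 1 to the summands T of [k - 1] shows
   that the weight of [k] exceeds b \<ge> 2 times that of [k - 1]. *)

definition summands :: "nat set \<Rightarrow> nat set set" where
  "summands A = {S. \<exists>H. sumset S H = A}"

definition summand_weight :: "nat \<Rightarrow> nat set \<Rightarrow> nat" where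
  "summand_weight b A = (\<Sum>S\<in>summands A. b ^ card S)"

lemma sumset_iff: "x \<in> sumset S T \<longleftrightarrow> (\<exists>s\<in>S. \<exists>t\<in>T. x = s + t)"
  by (auto simp: sumset_def)

lemma sumset_commute: "sumset S T = sumset T S"
  unfolding sumset_def by (metis add.commute)

lemma sumset_empty [simp]: "sumset S {} = {}" "sumset {} S = {}"
  by (auto simp: sumset_def)

lemma sumset_image_Suc_left: "sumset (Suc ` S) T = Suc ` sumset S T"
  by (fastforce simp: sumset_iff image_iff)

lemma sumset_image_Suc_right: "sumset S (Suc ` T) = Suc ` sumset S T"
  by (metis sumset_commute sumset_image_Suc_left)

lemma image_Suc_if_zero_notin:
  assumes "0 \<notin> X" obtains Y where "X = Suc ` Y"
proof
  have "x = Suc (x - 1)" if "x \<in> X" for x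
    using assms that by (cases x) auto
  then show "X = Suc ` (\<lambda>x. x - 1) ` X"
    by (auto simp: image_image)
qed

lemma summandI: "sumset S H = A \<Longrightarrow> S \<in> summands A"
  by (auto simp: summands_def)

lemma zero_summand: "{0} \<in> summands A"
  by (rule summandI[of _ A]) (auto simp: sumset_def)

lemma summand_self: "A \<in> summands A"
  by (rule summandI[of _ "{0}"]) (auto simp: sumset_def)

lemma summand_nonempty: "S \<in> summands A \<Longrightarrow> A \<noteq> {} \<Longrightarrow> S \<noteq> {}"
  by (auto simp: summands_def)

lemma summand_subset_atMost:
  assumes "S \<in> summands A" "A \<noteq> {}" "A \<subseteq> {..k}"
  shows "S \<subseteq> {..k}"
proof
  fix s assume "s \<in> S"
  obtain H where H: "sumset S H = A" using assms(1) by (auto simp: summands_def)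
  with assms(2) obtain h where "h \<in> H" by fastforce
  with H \<open>s \<in> S\<close> have "s + h \<in> A" using sumset_iff by blast
  with assms(3) show "s \<in> {..k}" by auto
qed

lemma finite_summand:
  assumes "S \<in> summands A" "A \<noteq> {}" "finite A"
  shows "finite S"
proof (rule finite_subset)
  show "S \<subseteq> {..Max A}"
    using summand_subset_atMost[OF assms(1,2), of "Max A"] assms(3) by (simp add: subset_eq)
qed simp

lemma finite_summands:
  assumes "A \<noteq> {}" "finite A"
  shows "finite (summands A)"
proof -
  obtain k where "A \<subseteq> {..k}" using assms(2) finite_nat_set_iff_bounded_le by auto
  with assms(1) have "summands A \<subseteq> Pow {..k}" using summand_subset_atMost by blast
  then show ?thesis by (rule finite_subset) simp
qed

lemma summand_subset_if_zero:
  assumes "0 \<in> A" "S \<in> summands A"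
  shows "S \<subseteq> A"
proof
  fix s assume "s \<in> S"
  obtain H where H: "sumset S H = A" using assms(2) by (auto simp: summands_def)
  with assms(1) obtain s' h where "s' \<in> S" "h \<in> H" "0 = s' + h" using sumset_iff by blast
  then have "0 \<in> H" by simp
  with \<open>s \<in> S\<close> have "s + 0 \<in> sumset S H" using sumset_iff by blast
  with H show "s \<in> A" by simp
qed

lemma sumset_Max_add_le:
  assumes "sumset S H = A" "A \<subseteq> {..k}" "finite S" "S \<noteq> {}" "h \<in> H"
  shows "Max S + h \<le> k"
proof -
  have "Max S \<in> S" using assms(3,4) by simp
  then have "Max S + h \<in> A" using assms(1,5) sumset_iff by blast
  with assms(2) show ?thesis by auto
qed

lemma summand_atMostI:
  assumes "m \<in> T" "\<forall>t\<in>T. t \<le> m" "m \<le> k"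
    and "\<And>x. x \<le> m \<Longrightarrow> \<exists>t\<in>T. t \<le> x \<and> x \<le> t + (k - m)"
  shows "T \<in> summands {..k}"
proof (rule summandI)
  show "sumset T {..k - m} = {..k}"
  proof
    show "sumset T {..k - m} \<subseteq> {..k}"
      using assms(2,3) by (fastforce simp: sumset_iff)
    show "{..k} \<subseteq> sumset T {..k - m}"
    proof
      fix x assume "x \<in> {..k}"
      show "x \<in> sumset T {..k - m}"
      proof (cases "x \<le> m")
        case True
        then obtain t where "t \<in> T" "t \<le> x" "x \<le> t + (k - m)" using assms(4) by blast
        then show ?thesis unfolding sumset_iff by (intro bexI[of _ t] bexI[of _ "x - t"]) auto
      next
        case False
        then show ?thesis using assms(1) \<open>x \<in> {..k}\<close> unfolding sumset_iff
          by (intro bexI[of _ m] bexI[of _ "x - m"]) auto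
      qed
    qed
  qed
qed

lemma sum_le_inj_image:
  fixes w v :: "'a \<Rightarrow> 'b::{canonically_ordered_monoid_add, ordered_cancel_comm_monoid_add}"
  assumes "finite Y" "inj_on \<phi> X" "\<phi> ` X \<subseteq> Y" "\<And>x. x \<in> X \<Longrightarrow> w x \<le> v (\<phi> x)"
  shows "sum w X \<le> sum v Y"
proof -
  have "sum w X \<le> sum (v \<circ> \<phi>) X" using assms(4) by (intro sum_mono) auto
  also have "\<dots> = sum v (\<phi> ` X)" using assms(2) by (simp add: sum.reindex)
  also have "\<dots> \<le> sum v Y" using assms(1,3) by (intro sum_mono2) auto
  finally show ?thesis .
qed

lemma sum_less_inj_image:
  fixes w v :: "'a \<Rightarrow> 'b::{canonically_ordered_monoid_add, ordered_cancel_comm_monoid_add}"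
  assumes "finite Y" "inj_on \<phi> X" "\<phi> ` X \<subseteq> Y" "\<And>x. x \<in> X \<Longrightarrow> w x \<le> v (\<phi> x)"
    and "(\<exists>x\<in>X. w x < v (\<phi> x)) \<or> (\<exists>y\<in>Y - \<phi> ` X. 0 < v y)"
  shows "sum w X < sum v Y"
  using assms(5)
proof
  assume "\<exists>x\<in>X. w x < v (\<phi> x)"
  moreover have "finite X"
    using assms(1-3) finite_imageD finite_subset by blast
  ultimately have "sum w X < sum (v \<circ> \<phi>) X"
    using assms(4) by (intro sum_strict_mono_ex1) auto
  also have "\<dots> = sum v (\<phi> ` X)" using assms(2) by (simp add: sum.reindex)
  also have "\<dots> \<le> sum v Y" using assms(1,3) by (intro sum_mono2) auto
  finally show ?thesis .
next
  assume "\<exists>y\<in>Y - \<phi> ` X. 0 < v y"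
  then obtain y where y: "y \<in> Y - \<phi> ` X" "0 < v y" by blast
  have "v y \<le> sum v (Y - \<phi> ` X)"
    using sum_mono2[of "Y - \<phi> ` X" "{y}" v] assms(1) y(1) by simp
  with y(2) have pos: "0 < sum v (Y - \<phi> ` X)" by (blast intro: order_less_le_trans)
  have "sum w X \<le> sum v (\<phi> ` X)"
    using assms(1-4) finite_subset by (intro sum_le_inj_image) auto
  also have "\<dots> < sum v (Y - \<phi> ` X) + sum v (\<phi> ` X)"
    using pos by (metis add.left_neutral add_strict_right_mono)
  also have "\<dots> = sum v Y"
    using assms(1,3) by (simp add: sum.subset_diff)
  finally show ?thesis .
qed

lemma Max_summand_le:
  assumes "S \<in> summands A" "A \<noteq> {}" "A \<subseteq> {..k}"
  shows "Max S \<le> k"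
proof -
  have "finite S" "S \<noteq> {}"
    using finite_summand[OF assms(1,2)] summand_nonempty[OF assms(1,2)] assms(3)
    by (auto intro: finite_subset)
  then show ?thesis using summand_subset_atMost[OF assms] by auto
qed

definition fill_gaps :: "nat set \<Rightarrow> nat set \<Rightarrow> nat set" where
  "fill_gaps A S = S \<union> ({..Max S} - A)"

lemma fill_gaps_le_Max: "finite S \<Longrightarrow> t \<in> fill_gaps A S \<Longrightarrow> t \<le> Max S"
  by (auto simp: fill_gaps_def)

lemma fill_gaps_Int: "S \<subseteq> A \<Longrightarrow> fill_gaps A S \<inter> A = S"
  by (auto simp: fill_gaps_def)

lemma fill_gaps_summand_atMost:
  assumes "S \<in> summands A" "A \<noteq> {}" "A \<subseteq> {..k}"
  shows "fill_gaps A S \<in> summands {..k}"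
proof (rule summand_atMostI)
  obtain H where H: "sumset S H = A" using assms(1) by (auto simp: summands_def)
  have S: "finite S" "S \<noteq> {}"
    using finite_summand[OF assms(1,2)] summand_nonempty[OF assms(1,2)] assms(3)
    by (auto intro: finite_subset)
  show "Max S \<in> fill_gaps A S" using S by (simp add: fill_gaps_def)
  show "\<forall>t\<in>fill_gaps A S. t \<le> Max S" using S(1) fill_gaps_le_Max by blast
  show "Max S \<le> k" using Max_summand_le[OF assms] .
  show "\<exists>t\<in>fill_gaps A S. t \<le> x \<and> x \<le> t + (k - Max S)" if "x \<le> Max S" for x
  proof (cases "x \<in> A")
    case True
    then obtain s h where "s \<in> S" "h \<in> H" "x = s + h" using H sumset_iff by blast
    moreover have "Max S + h \<le> k" using sumset_Max_add_le[OF H assms(3) S] \<open>h \<in> H\<close> .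
    ultimately show ?thesis unfolding fill_gaps_def by (intro bexI[of _ s]) auto
  next
    case False
    with that have "x \<in> fill_gaps A S" by (simp add: fill_gaps_def)
    then show ?thesis by auto
  qed
qed

lemma summand_weight_less_atMost_if_zero:
  assumes "b \<ge> 2" "0 \<in> A" "A \<subseteq> {..k}" "A \<noteq> {..k}"
  shows "summand_weight b A < summand_weight b {..k}"
proof -
  have A: "A \<noteq> {}" "finite A" using assms(2,3) finite_subset by auto
  have S: "finite S" "S \<subseteq> A" if "S \<in> summands A" for S
    using finite_summand[OF that A] summand_subset_if_zero[OF assms(2) that] by auto
  have "inj_on (fill_gaps A) (summands A)"
    using S(2) fill_gaps_Int by (metis inj_onI)
  moreover have "b ^ card S \<le> b ^ card (fill_gaps A S)" if "S \<in> summands A" for S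
  proof -
    have "card S \<le> card (fill_gaps A S)"
      using S(1)[OF that] by (intro card_mono) (auto simp: fill_gaps_def)
    then show ?thesis using assms(1) by (simp add: power_increasing)
  qed
  moreover have "(\<exists>S\<in>summands A. b ^ card S < b ^ card (fill_gaps A S))
    \<or> (\<exists>T\<in>summands {..k} - fill_gaps A ` summands A. 0 < b ^ card T)"
  proof (cases "Max A = k")
    case True
    then have "fill_gaps A A = {..k}" using assms(3) by (auto simp: fill_gaps_def)
    moreover have "card A < card {..k}" using assms(3,4) by (intro psubset_card_mono) auto
    ultimately have "b ^ card A < b ^ card (fill_gaps A A)"
      using assms(1) by (intro power_strict_increasing) auto
    then show ?thesis using summand_self by blast
  next
    case False
    with A assms(3) have "Max A < k" by (metis Max_in atMost_iff le_neq_implies_less subsetD)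
    moreover have "t \<le> Max A" if "S \<in> summands A" "t \<in> fill_gaps A S" for S t
      using fill_gaps_le_Max[OF S(1)] Max_mono[OF S(2)] summand_nonempty A that by (meson le_trans)
    ultimately have "{..k} \<notin> fill_gaps A ` summands A" by fastforce
    then show ?thesis using summand_self assms(1) by auto
  qed
  ultimately show ?thesis
    unfolding summand_weight_def using finite_summands[of "{..k}"] fill_gaps_summand_atMost assms(3) A
    by (intro sum_less_inj_image[where \<phi> = "fill_gaps A"]) auto
qed

lemma insert_Suc_Max_summand_atMost:
  assumes "T \<in> summands {..k}"
  shows "insert (Suc (Max T)) T \<in> summands {..Suc k}"
proof (rule summand_atMostI)
  obtain H where H: "sumset T H = {..k}" using assms by (auto simp: summands_def)
  have T: "finite T" "T \<noteq> {}" "Max T \<le> k"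
    using finite_summand[OF assms] summand_nonempty[OF assms] Max_summand_le[OF assms] by auto
  show "Suc (Max T) \<in> insert (Suc (Max T)) T" by simp
  show "\<forall>t\<in>insert (Suc (Max T)) T. t \<le> Suc (Max T)" using T(1) by (auto simp: le_SucI)
  show "Suc (Max T) \<le> Suc k" using T(3) by simp
  show "\<exists>t\<in>insert (Suc (Max T)) T. t \<le> x \<and> x \<le> t + (Suc k - Suc (Max T))"
    if "x \<le> Suc (Max T)" for x
  proof (cases "x = Suc (Max T)")
    case False
    with that T(3) have "x \<in> sumset T H" using H by auto
    then obtain t h where "t \<in> T" "h \<in> H" "x = t + h" using sumset_iff by blast
    moreover have "Max T + h \<le> k" using sumset_Max_add_le[OF H order_refl T(1,2)] \<open>h \<in> H\<close> .
    ultimately show ?thesis by (intro bexI[of _ t]) auto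
  qed simp
qed

lemma summand_weight_atMost_Suc_gt:
  assumes "b \<ge> 1"
  shows "b * summand_weight b {..k} < summand_weight b {..Suc k}"
proof -
  let ?extend = "\<lambda>T. insert (Suc (Max T)) T"
  have T: "finite T" "Suc (Max T) \<notin> T" if "T \<in> summands {..k}" for T
  proof -
    show "finite T" using finite_summand[OF that] by simp
    then show "Suc (Max T) \<notin> T" using Max_ge Suc_n_not_le_n by blast
  qed
  have "inj_on ?extend (summands {..k})"
  proof (rule inj_onI)
    fix T T' assume T_T': "T \<in> summands {..k}" "T' \<in> summands {..k}" "?extend T = ?extend T'"
    then have "Max (?extend T) = Max (?extend T')" by simp
    then have "Max T = Max T'" using T(1) T_T'(1,2) summand_nonempty by (auto simp: max_def split: if_splits)
    then show "T = T'" using T_T' T(2) by (metis Diff_insert_absorb)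
  qed
  moreover have "b * b ^ card T \<le> b ^ card (?extend T)" if "T \<in> summands {..k}" for T
    using T[OF that] by simp
  moreover have "{0} \<in> summands {..Suc k} - ?extend ` summands {..k}"
    using zero_summand by auto
  ultimately have "(\<Sum>T\<in>summands {..k}. b * b ^ card T) < summand_weight b {..Suc k}"
    unfolding summand_weight_def
    using finite_summands[of "{..Suc k}"] insert_Suc_Max_summand_atMost assms
    by (intro sum_less_inj_image[where \<phi> = ?extend]) auto
  then show ?thesis by (simp add: summand_weight_def sum_distrib_left)
qed

lemma summands_image_Suc: "summands (Suc ` A) \<subseteq> summands A \<union> image Suc ` summands A"
proof
  fix S assume "S \<in> summands (Suc ` A)"
  then obtain H where H: "sumset S H = Suc ` A" by (auto simp: summands_def)
  then have "0 \<notin> S \<or> 0 \<notin> H" by (force simp: sumset_iff)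
  then show "S \<in> summands A \<union> image Suc ` summands A"
  proof
    assume "0 \<notin> S"
    then obtain S' where S': "S = Suc ` S'" by (rule image_Suc_if_zero_notin)
    with H have "sumset S' H = A" by (simp add: sumset_image_Suc_left inj_image_eq_iff)
    then show ?thesis using S' summandI by blast
  next
    assume "0 \<notin> H"
    then obtain H' where "H = Suc ` H'" by (rule image_Suc_if_zero_notin)
    with H have "sumset S H' = A" by (simp add: sumset_image_Suc_right inj_image_eq_iff)
    then show ?thesis using summandI by blast
  qed
qed

lemma summand_weight_image_Suc_le:
  assumes "A \<noteq> {}" "finite A"
  shows "summand_weight b (Suc ` A) \<le> 2 * summand_weight b A"
proof -
  have fin: "finite (summands A)" using finite_summands[OF assms] .
  have "summand_weight b (Suc ` A) \<le> (\<Sum>S\<in>summands A \<union> image Suc ` summands A. b ^ card S)"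
    unfolding summand_weight_def using fin summands_image_Suc by (intro sum_mono2) auto
  also have "\<dots> \<le> summand_weight b A + (\<Sum>S\<in>image Suc ` summands A. b ^ card S)"
    unfolding summand_weight_def using fin by (simp add: sum_Un_nat)
  also have "(\<Sum>S\<in>image Suc ` summands A. b ^ card S) = summand_weight b A"
    unfolding summand_weight_def
    by (subst sum.reindex) (auto intro: inj_onI simp: inj_image_eq_iff card_image)
  finally show ?thesis by simp
qed

lemma summand_weight_less_atMost:
  assumes "b \<ge> 2" "A \<noteq> {}" "A \<subseteq> {..k}" "A \<noteq> {..k}"
  shows "summand_weight b A < summand_weight b {..k}"
  using assms(2-4)
proof (induction k arbitrary: A)
  case 0
  then show ?case by (auto simp: subset_singleton_iff)
next
  case (Suc k)
  show ?case
  proof (cases "0 \<in> A")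
    case True
    then show ?thesis using summand_weight_less_atMost_if_zero[OF assms(1)] Suc.prems by blast
  next
    case False
    then obtain A' where A': "A = Suc ` A'" by (rule image_Suc_if_zero_notin)
    with Suc.prems have "A' \<noteq> {}" "A' \<subseteq> {..k}" by auto
    then have "summand_weight b A' \<le> summand_weight b {..k}"
      using Suc.IH by (cases "A' = {..k}") (auto intro: less_imp_le)
    moreover have "summand_weight b A \<le> 2 * summand_weight b A'"
      using A' summand_weight_image_Suc_le \<open>A' \<noteq> {}\<close> \<open>A' \<subseteq> {..k}\<close>
      by (metis finite_atMost finite_subset)
    ultimately have "summand_weight b A \<le> b * summand_weight b {..k}"
      using assms(1) by (metis le_trans mult_le_mono)
    also have "\<dots> < summand_weight b {..Suc k}"
      using summand_weight_atMost_Suc_gt assms(1) by simp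
    finally show ?thesis .
  qed
qed

definition Mb_with_support :: "nat \<Rightarrow> nat set \<Rightarrow> (nat \<Rightarrow> nat) set" where
  "Mb_with_support b S = {g. (\<forall>x. g x \<le> b) \<and> setarr g 1 = S}"

lemma bij_betw_restrict_Mb_with_support:
  "bij_betw (\<lambda>g. restrict g S) (Mb_with_support b S) (S \<rightarrow>\<^sub>E {1..b})"
  by (rule bij_betw_byWitness[where f' = "\<lambda>p x. if x \<in> S then p x else 0"])
    (auto simp: Mb_with_support_def setarr_def fun_eq_iff PiE_def extensional_def split: if_splits)

lemma card_Mb_with_support: "finite S \<Longrightarrow> card (Mb_with_support b S) = b ^ card S"
  using bij_betw_same_card[OF bij_betw_restrict_Mb_with_support] by (simp add: card_PiE)

lemma finite_Mb_with_support: "finite S \<Longrightarrow> finite (Mb_with_support b S)"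
  using bij_betw_finite[OF bij_betw_restrict_Mb_with_support] by (simp add: finite_PiE)

lemma divisor_if_summand:
  assumes "b \<ge> 1" "A \<noteq> {}" "finite A"
    and "setarr f 1 = A" "\<forall>i\<in>{2..b}. setarr f i = {}"
    and "S \<in> summands A" "g \<in> Mb_with_support b S"
  shows "divisor b g f"
proof -
  obtain H where H: "sumset S H = A" using assms(6) by (auto simp: summands_def)
  define h :: "nat \<Rightarrow> nat" where "h x = (if x \<in> H then 1 else 0)" for x
  have "finite S" "finite H"
    using finite_summand[OF _ assms(2,3)] assms(6) H sumset_commute summandI by metis+
  moreover have "{a. g a \<noteq> 0} = S"
    using assms(7) by (auto simp: Mb_with_support_def setarr_def)
  moreover have "{a. h a \<noteq> 0} = H"
    by (auto simp: h_def)
  ultimately have "g \<in> Mb b" "h \<in> Mb b"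
    using assms(1,7) by (auto simp: Mb_def Mb_with_support_def h_def)
  moreover have "setarr f i = sumset (setarr g i) (setarr h i)" if "i \<in> {1..b}" for i
  proof -
    from that consider "i = 1" | "i \<in> {2..b}" by fastforce
    then show ?thesis
    proof cases
      case 1
      have "setarr h 1 = H" by (auto simp: setarr_def h_def)
      then show ?thesis using 1 assms(4,7) H by (simp add: Mb_with_support_def)
    next
      case 2
      then have "setarr h i = {}" by (auto simp: setarr_def h_def)
      then show ?thesis using 2 assms(5) by simp
    qed
  qed
  ultimately show ?thesis by (auto simp: divisor_def is_msum_def)
qed

lemma divisors_eq_UN_summands:
  assumes "b \<ge> 1" "A \<noteq> {}" "finite A"
    and "setarr f 1 = A" "\<forall>i\<in>{2..b}. setarr f i = {}"
  shows "{g. divisor b g f} = (\<Union>S\<in>summands A. Mb_with_support b S)"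
proof
  show "{g. divisor b g f} \<subseteq> (\<Union>S\<in>summands A. Mb_with_support b S)"
  proof
    fix g assume "g \<in> {g. divisor b g f}"
    then obtain h where "g \<in> Mb b" "is_msum b f g h" by (auto simp: divisor_def)
    with assms(1,4) have "sumset (setarr g 1) (setarr h 1) = A" by (auto simp: is_msum_def)
    moreover have "g \<in> Mb_with_support b (setarr g 1)"
      using \<open>g \<in> Mb b\<close> by (auto simp: Mb_with_support_def Mb_def)
    ultimately show "g \<in> (\<Union>S\<in>summands A. Mb_with_support b S)" using summandI by blast
  qed
  show "(\<Union>S\<in>summands A. Mb_with_support b S) \<subseteq> {g. divisor b g f}"
    using divisor_if_summand[OF assms] by blast
qed

lemma num_div_eq_summand_weight:
  assumes "b \<ge> 1" "A \<noteq> {}" "finite A"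
    and "setarr f 1 = A" "\<forall>i\<in>{2..b}. setarr f i = {}"
  shows "num_div b f = summand_weight b A"
proof -
  have "num_div b f = card (\<Union>S\<in>summands A. Mb_with_support b S)"
    unfolding num_div_def divisors_eq_UN_summands[OF assms] ..
  also have "\<dots> = (\<Sum>S\<in>summands A. card (Mb_with_support b S))"
    using finite_summands[OF assms(2,3)] finite_summand[OF _ assms(2,3)] finite_Mb_with_support
    by (intro card_UN_disjoint) (auto simp: Mb_with_support_def)
  also have "\<dots> = summand_weight b A"
    unfolding summand_weight_def using finite_summand[OF _ assms(2,3)]
    by (simp add: card_Mb_with_support)
  finally show ?thesis .
qed

theorem mainTheorem13:
  fixes b k :: nat and A :: "nat set" and f :: "nat \<Rightarrow> nat"
  assumes "b \<ge> 2"
    and "A \<noteq> {}" and "A \<subseteq> {0..k}"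
    and "f \<in> Mb b"
    and "setarr f 1 = A" and "\<forall>i\<in>{2..b}. setarr f i = {}"
  shows "num_div b f \<le> num_div b (intv_b b k)
       \<and> (f \<noteq> intv_b b k \<longrightarrow> num_div b f < num_div b (intv_b b k))"
proof -
  have A_atMost: "A \<subseteq> {..k}" and "finite A"
    using assms(3) finite_subset by auto
  have "num_div b f = summand_weight b A"
    using num_div_eq_summand_weight assms(1,2,5,6) \<open>finite A\<close> by simp
  moreover have "num_div b (intv_b b k) = summand_weight b {..k}"
    using assms(1) by (intro num_div_eq_summand_weight) (auto simp: setarr_def intv_b_def)
  moreover have "f = intv_b b k" if "A = {..k}"
  proof
    fix x
    have "setarr f 2 = {}" using assms(1,6) by simp
    then have "\<not> 2 \<le> f x" by (auto simp: setarr_def)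
    moreover have "x \<in> A \<longleftrightarrow> f x \<ge> 1" using assms(5) by (auto simp: setarr_def)
    ultimately show "f x = intv_b b k x" using that by (auto simp: intv_b_def)
  qed
  ultimately show ?thesis
    using summand_weight_less_atMost[OF assms(1,2) A_atMost] by fastforce
qed

end
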